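(* Let $\alpha_1,\alpha_2,\alpha_3\in\mathbb{C}$ and let $\mathbf{x}=(x_s)\in\mathbb{C}^{\mathbb{Z}}$ satisfy, for all $v\in\mathbb{Z}$ (with $z_i=x_{v+i}$), $$z_0^2z_3^2+\alpha_1z_1^2z_2^2+\alpha_2z_0z_1z_2z_3+\alpha_3(z_0z_2^3+z_1^3z_3)=0.$$ Then for all $v\in\mathbb{Z}$, with $z_i=x_{v+i}$, $$(2z_0^2z_3+\alpha_2z_0z_1z_2+\alpha_3z_1^3)^2=(2z_{-1}z_2^2+\alpha_2z_0z_1z_2+\alpha_3z_1^3)^2=D,$$ where $D=\alpha_3^2z_1^6+2\alpha_2\alpha_3z_0z_1^4z_2+(\alpha_2^2-4\alpha_1)z_0^2z_1^2z_2^2-4\alpha_3z_0^3z_2^3$. *)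

theory Defs
  imports Complex_Main
begin

end

theory Submission
  imports Defs
begin

text \<open>Viewed as a quadratic in its last entry, the quartic relation on the window
\<open>z\<^sub>0, \<dots>, z\<^sub>3\<close> has discriminant \<open>D\<close>; viewed as a quadratic in its first entry, the relation on
the preceding window \<open>x\<^bsub>v-1\<^esub>, z\<^sub>0, z\<^sub>1, z\<^sub>2\<close> has the same discriminant, because \<open>D\<close> only
involves the shared entries \<open>z\<^sub>0, z\<^sub>1, z\<^sub>2\<close>. Completing the square in both relations and using
that each vanishes gives the two claimed squares equal to \<open>D\<close>.\<close>

definition quartic_form :: "'a::comm_ring_1 \<Rightarrow> 'a \<Rightarrow> 'a \<Rightarrow> 'a \<Rightarrow> 'a \<Rightarrow> 'a \<Rightarrow> 'a \<Rightarrow> 'a"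
  where "quartic_form \<alpha>1 \<alpha>2 \<alpha>3 z0 z1 z2 z3 =
    z0^2 * z3^2 + \<alpha>1 * z1^2 * z2^2 + \<alpha>2 * z0 * z1 * z2 * z3 + \<alpha>3 * (z0 * z2^3 + z1^3 * z3)"

definition quartic_discr :: "'a::comm_ring_1 \<Rightarrow> 'a \<Rightarrow> 'a \<Rightarrow> 'a \<Rightarrow> 'a \<Rightarrow> 'a \<Rightarrow> 'a"
  where "quartic_discr \<alpha>1 \<alpha>2 \<alpha>3 z0 z1 z2 =
    \<alpha>3^2 * z1^6 + 2 * \<alpha>2 * \<alpha>3 * z0 * z1^4 * z2
      + (\<alpha>2^2 - 4 * \<alpha>1) * z0^2 * z1^2 * z2^2 - 4 * \<alpha>3 * z0^3 * z2^3"

lemma quartic_form_complete_square_last: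
  "(2 * z0^2 * z3 + \<alpha>2 * z0 * z1 * z2 + \<alpha>3 * z1^3)^2
     = quartic_discr \<alpha>1 \<alpha>2 \<alpha>3 z0 z1 z2 + 4 * z0^2 * quartic_form \<alpha>1 \<alpha>2 \<alpha>3 z0 z1 z2 z3"
  unfolding quartic_form_def quartic_discr_def
  by (simp add: algebra_simps power2_eq_square power3_eq_cube power4_eq_xxxx eval_nat_numeral)

lemma quartic_form_complete_square_first:
  "(2 * z0 * z3^2 + \<alpha>2 * z1 * z2 * z3 + \<alpha>3 * z2^3)^2
     = quartic_discr \<alpha>1 \<alpha>2 \<alpha>3 z1 z2 z3 + 4 * z3^2 * quartic_form \<alpha>1 \<alpha>2 \<alpha>3 z0 z1 z2 z3"
  unfolding quartic_form_def quartic_discr_def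
  by (simp add: algebra_simps power2_eq_square power3_eq_cube power4_eq_xxxx eval_nat_numeral)

theorem proposition6p1:
  fixes \<alpha>1 \<alpha>2 \<alpha>3 :: complex and x :: "int \<Rightarrow> complex"
  assumes rec: "\<And>v::int. (x v)^2 * (x (v+3))^2 + \<alpha>1 * (x (v+1))^2 * (x (v+2))^2
      + \<alpha>2 * x v * x (v+1) * x (v+2) * x (v+3)
      + \<alpha>3 * (x v * (x (v+2))^3 + (x (v+1))^3 * x (v+3)) = 0"
  shows "\<forall>v::int.
    (2 * (x v)^2 * x (v+3) + \<alpha>2 * x v * x (v+1) * x (v+2) + \<alpha>3 * (x (v+1))^3)^2
      = (2 * x (v-1) * (x (v+2))^2 + \<alpha>2 * x v * x (v+1) * x (v+2) + \<alpha>3 * (x (v+1))^3)^2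
    \<and> (2 * x (v-1) * (x (v+2))^2 + \<alpha>2 * x v * x (v+1) * x (v+2) + \<alpha>3 * (x (v+1))^3)^2
      = \<alpha>3^2 * (x (v+1))^6 + 2 * \<alpha>2 * \<alpha>3 * x v * (x (v+1))^4 * x (v+2)
        + (\<alpha>2^2 - 4 * \<alpha>1) * (x v)^2 * (x (v+1))^2 * (x (v+2))^2
        - 4 * \<alpha>3 * (x v)^3 * (x (v+2))^3"
proof
  fix v :: int
  have window: "quartic_form \<alpha>1 \<alpha>2 \<alpha>3 (x w) (x (w+1)) (x (w+2)) (x (w+3)) = 0" for w
    using rec[of w] by (simp add: quartic_form_def)
  have "quartic_form \<alpha>1 \<alpha>2 \<alpha>3 (x (v-1)) (x v) (x (v+1)) (x (v+2)) = 0"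
    using window[of "v-1"] by (simp add: algebra_simps)
  then have "(2 * x (v-1) * (x (v+2))^2 + \<alpha>2 * x v * x (v+1) * x (v+2) + \<alpha>3 * (x (v+1))^3)^2
      = quartic_discr \<alpha>1 \<alpha>2 \<alpha>3 (x v) (x (v+1)) (x (v+2))"
    using quartic_form_complete_square_first[where ?z0.0 = "x (v-1)" and ?z1.0 = "x v" and ?z2.0 = "x (v+1)"
        and ?z3.0 = "x (v+2)" and ?\<alpha>1.0 = \<alpha>1 and ?\<alpha>2.0 = \<alpha>2 and ?\<alpha>3.0 = \<alpha>3]
    by (simp add: mult.commute mult.left_commute)
  moreover have "(2 * (x v)^2 * x (v+3) + \<alpha>2 * x v * x (v+1) * x (v+2) + \<alpha>3 * (x (v+1))^3)^2
      = quartic_discr \<alpha>1 \<alpha>2 \<alpha>3 (x v) (x (v+1)) (x (v+2))"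
    using quartic_form_complete_square_last[where ?z0.0 = "x v" and ?z1.0 = "x (v+1)" and ?z2.0 = "x (v+2)"
        and ?z3.0 = "x (v+3)" and ?\<alpha>1.0 = \<alpha>1 and ?\<alpha>2.0 = \<alpha>2 and ?\<alpha>3.0 = \<alpha>3]
      window[of v] by simp
  ultimately show "(2 * (x v)^2 * x (v+3) + \<alpha>2 * x v * x (v+1) * x (v+2) + \<alpha>3 * (x (v+1))^3)^2
      = (2 * x (v-1) * (x (v+2))^2 + \<alpha>2 * x v * x (v+1) * x (v+2) + \<alpha>3 * (x (v+1))^3)^2
    \<and> (2 * x (v-1) * (x (v+2))^2 + \<alpha>2 * x v * x (v+1) * x (v+2) + \<alpha>3 * (x (v+1))^3)^2
      = \<alpha>3^2 * (x (v+1))^6 + 2 * \<alpha>2 * \<alpha>3 * x v * (x (v+1))^4 * x (v+2)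
        + (\<alpha>2^2 - 4 * \<alpha>1) * (x v)^2 * (x (v+1))^2 * (x (v+2))^2
        - 4 * \<alpha>3 * (x v)^3 * (x (v+2))^3"
    by (simp add: quartic_discr_def)
qed

end
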